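(* Let $\mathcal{A}$ be a separating union-closed family with base set $[n]$ and height $h=4$, and let $\mathcal{B}=\{B_1,B_2,B_3\}$ be a choice of $\mathcal{B}(\mathcal{A})$ with $|\mathcal{B}|=3$. Suppose $|B|=n-1$, where $B=b(\mathcal{A}_{<n/2})$, and let $A \in \mathcal{A}_{<n/2} \setminus \mathcal{B}$. Then either $A = \bigcup_{i=1}^3 \mathrm{irr}_{\mathcal{B}}(B_i)$, or $A$ satisfies exactly one of the following three conditions: (i) $A \cap \mathrm{irr}_{\mathcal{B}}(B_1) = \emptyset$ and $(B_2 \cup B_3) \setminus (B_2 \cap B_3) \subseteq A$; (ii) $A \cap \mathrm{irr}_{\mathcal{B}}(B_2) = \emptyset$ and $(B_1 \cup B_3) \setminus (B_1 \cap B_3) \subseteq A$; (iii) $A \cap \mathrm{irr}_{\mathcal{B}}(B_3) = \emptyset$ and $(B_1 \cup B_2) \setminus (B_1 \cap B_2) \subseteq A$.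
   Context: A family of sets $\mathcal{A}$ is union-closed if it is a finite family of distinct finite sets with at least one nonempty member set, and $X,Y\in\mathcal{A}$ implies $X\cup Y\in\mathcal{A}$ (the empty set may be a member). For a family $\mathcal{F}$, $b(\mathcal{F})=\bigcup_{F\in\mathcal{F}}F$; the base set $b(\mathcal{A})$ is denoted $[n]=\{1,\dots,n\}$. $\mathcal{A}$ is separating if for any two distinct $x,y\in[n]$ there is $A\in\mathcal{A}$ containing exactly one of $x,y$. A chain in $\mathcal{A}$ is a subfamily any two distinct members of which are comparable under proper inclusion; the height $h$ of $\mathcal{A}$ is the maximum size of a chain in $\mathcal{A}$. For real $x\ge 0$, $\mathcal{A}_{<x}=\{A\in\mathcal{A} : |A|<x\}$. For $\mathcal{S}\subseteq\mathcal{A}$ and $S\in\mathcal{S}$, $\mathrm{irr}_{\mathcal{S}}(S)=\{s\in S : s\notin b(\mathcal{S}\setminus\{S\})\}$, and $\mathcal{S}$ is irredundant if $\mathrm{irr}_{\mathcal{S}}(S)\neq\emptyset$ for every $S\in\mathcal{S}$. With $B=b(\mathcal{A}_{<n/2})$, $\mathcal{B}(\mathcal{A})$ denotes any irredundant subfamily of $\mathcal{A}_{<n/2}$ of minimum size such that $b(\mathcal{B}(\mathcal{A}))=B$. *)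

theory Defs
  imports Complex_Main
begin

definition union_closed :: "nat set set \<Rightarrow> bool" where
  "union_closed \<A> \<longleftrightarrow> finite \<A> \<and> (\<forall>A\<in>\<A>. finite A) \<and> (\<exists>A\<in>\<A>. A \<noteq> {})
     \<and> (\<forall>X\<in>\<A>. \<forall>Y\<in>\<A>. X \<union> Y \<in> \<A>)"

definition separating :: "nat set set \<Rightarrow> bool" where
  "separating \<A> \<longleftrightarrow> (\<forall>x\<in>\<Union>\<A>. \<forall>y\<in>\<Union>\<A>. x \<noteq> y \<longrightarrow> (\<exists>A\<in>\<A>. (x \<in> A) \<noteq> (y \<in> A)))"

definition is_chain_fam :: "nat set set \<Rightarrow> bool" where
  "is_chain_fam \<C> \<longleftrightarrow> (\<forall>X\<in>\<C>. \<forall>Y\<in>\<C>. X \<subseteq> Y \<or> Y \<subseteq> X)"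

definition height :: "nat set set \<Rightarrow> nat" where
  "height \<A> = Max {card \<C> | \<C>. \<C> \<subseteq> \<A> \<and> is_chain_fam \<C>}"

definition below :: "nat set set \<Rightarrow> real \<Rightarrow> nat set set" where
  "below \<A> x = {A \<in> \<A>. real (card A) < x}"

definition irr :: "nat set set \<Rightarrow> nat set \<Rightarrow> nat set" where
  "irr \<S> S = {s \<in> S. s \<notin> \<Union>(\<S> - {S})}"

definition irredundant :: "nat set set \<Rightarrow> bool" where
  "irredundant \<S> \<longleftrightarrow> (\<forall>S\<in>\<S>. irr \<S> S \<noteq> {})"

definition is_B_choice :: "nat set set \<Rightarrow> nat \<Rightarrow> nat set set \<Rightarrow> bool" where
  "is_B_choice \<A> n \<B> \<longleftrightarrow>
     \<B> \<subseteq> below \<A> (real n / 2) \<and> irredundant \<B> \<and> \<Union>\<B> = \<Union>(below \<A> (real n / 2)) \<and>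
     (\<forall>\<B>'. \<B>' \<subseteq> below \<A> (real n / 2) \<and> irredundant \<B>' \<and> \<Union>\<B>' = \<Union>(below \<A> (real n / 2))
        \<longrightarrow> card \<B> \<le> card \<B>')"

end

theory Submission imports Defs begin

(* Height 4 forbids strict chains of five members. Every chain below ends with
   B1 \<union> B2 \<union> B3 \<subset> [n], proper because the union has n - 1 elements, so no three strict
   inclusions between unions of A and the B_i can end in B1 \<union> B2 \<union> B3. Minimality of the
   cover excludes A \<union> B_i = B1 \<union> B2 \<union> B3, as {A, B_i} would contain a smaller irredundant one.
   If irr(B3) is not contained in A, the chain B1 \<subset> B1 \<union> A \<subset> B1 \<union> A \<union> B2 \<subset> B1 \<union> B2 \<union> B3
   and its mirror image put the symmetric difference of B1 and B2 into A; then irr(B1) and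
   irr(B2) lie in A (otherwise A \<union> B2 or A \<union> B1 would be the whole union), and the chain
   B2 \<subset> B2 \<union> B1 \<subset> B2 \<union> A \<subset> B1 \<union> B2 \<union> B3 makes A disjoint from irr(B3): exactly condition
   (iii) holds. If A contains all three irreducible parts, counting with |B_i|, |A| < n/2 shows
   that A is their union. *)

lemma card_chain_le_height:
  assumes "finite F" and "C \<subseteq> F" and "is_chain_fam C"
  shows "card C \<le> height F"
proof -
  have "{card C | C. C \<subseteq> F \<and> is_chain_fam C} \<subseteq> card ` Pow F" by blast
  then have "finite {card C | C. C \<subseteq> F \<and> is_chain_fam C}"
    by (rule finite_subset) (simp add: \<open>finite F\<close>)
  then show ?thesis unfolding height_def by (rule Max_ge) (use assms in blast)
qed

lemma union_closed_Un: "union_closed F \<Longrightarrow> X \<in> F \<Longrightarrow> Y \<in> F \<Longrightarrow> X \<union> Y \<in> F"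
  unfolding union_closed_def by blast

lemma union_closed_Union_mem:
  assumes "union_closed F"
  shows "\<Union>F \<in> F"
proof -
  have "finite F" and "F \<noteq> {}" using assms unfolding union_closed_def by blast+
  have "\<Union>S \<in> F" if "finite S" "S \<noteq> {}" "S \<subseteq> F" for S
    using that by (induction S rule: finite_ne_induct) (auto intro: union_closed_Un[OF assms])
  then show ?thesis using \<open>finite F\<close> \<open>F \<noteq> {}\<close> by blast
qed

lemma irredundant_subfamily_exists:
  assumes "finite S"
  shows "\<exists>S' \<subseteq> S. irredundant S' \<and> \<Union>S' = \<Union>S"
  using assms
proof (induction "card S" arbitrary: S rule: less_induct)
  case less
  show ?case
  proof (cases "irredundant S")
    case False
    then obtain T where "T \<in> S" and "irr S T = {}" unfolding irredundant_def by blast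
    have "card (S - {T}) < card S"
      using \<open>finite S\<close> \<open>T \<in> S\<close> by (rule card_Diff1_less)
    then obtain S' where "S' \<subseteq> S - {T}" and "irredundant S'" and "\<Union>S' = \<Union>(S - {T})"
      using less.hyps[of "S - {T}"] \<open>finite S\<close> by auto
    moreover have "\<Union>(S - {T}) = \<Union>S" using \<open>irr S T = {}\<close> unfolding irr_def by blast
    ultimately show ?thesis by (intro exI[of _ S']) auto
  qed (intro exI[of _ S], simp)
qed

lemma card_B_choice_le_card_cover:
  assumes "is_B_choice F n \<B>" and "S \<subseteq> below F (real n / 2)" and "finite S"
    and "\<Union>S = \<Union>(below F (real n / 2))"
  shows "card \<B> \<le> card S"
proof -
  obtain S' where "S' \<subseteq> S" and "irredundant S'" and "\<Union>S' = \<Union>S"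
    using irredundant_subfamily_exists[OF \<open>finite S\<close>] by blast
  then have "card \<B> \<le> card S'"
    using assms unfolding is_B_choice_def by (metis subset_trans)
  also have "\<dots> \<le> card S" using \<open>S' \<subseteq> S\<close> \<open>finite S\<close> by (rule card_mono[rotated])
  finally show ?thesis .
qed

lemma card_Un3_add_card_shared_le:
  assumes "finite X" and "finite Y" and "finite Z"
  shows "card (X \<union> Y \<union> Z)
      + card ((X \<union> Y \<union> Z) - ((X - (Y \<union> Z)) \<union> (Y - (X \<union> Z)) \<union> (Z - (X \<union> Y))))
    \<le> card X + card Y + card Z"
proof -
  have "(X \<union> Y \<union> Z) - ((X - (Y \<union> Z)) \<union> (Y - (X \<union> Z)) \<union> (Z - (X \<union> Y)))
      = (X \<inter> Y) \<union> ((X \<union> Y) \<inter> Z)" by blast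
  then have "card ((X \<union> Y \<union> Z) - ((X - (Y \<union> Z)) \<union> (Y - (X \<union> Z)) \<union> (Z - (X \<union> Y))))
      \<le> card (X \<inter> Y) + card ((X \<union> Y) \<inter> Z)"
    by (simp only: card_Un_le)
  moreover have "card X + card Y = card (X \<union> Y) + card (X \<inter> Y)"
    using assms by (intro card_Un_Int)
  moreover have "card (X \<union> Y) + card Z = card (X \<union> Y \<union> Z) + card ((X \<union> Y) \<inter> Z)"
    using assms by (intro card_Un_Int) auto
  ultimately show ?thesis by linarith
qed

lemma eq_Un_irr_if_card_small:
  fixes n :: nat
  assumes "finite X" and "finite Y" and "finite Z" and "finite A"
    and "2 * card X < n" and "2 * card Y < n" and "2 * card Z < n" and "2 * card A < n"
    and card_U: "card (X \<union> Y \<union> Z) = n - 1"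
    and irr_subset: "(X - (Y \<union> Z)) \<union> (Y - (X \<union> Z)) \<union> (Z - (X \<union> Y)) \<subseteq> A"
  shows "A = (X - (Y \<union> Z)) \<union> (Y - (X \<union> Z)) \<union> (Z - (X \<union> Y))"
proof (rule ccontr)
  define U where "U = X \<union> Y \<union> Z"
  define I where "I = (X - (Y \<union> Z)) \<union> (Y - (X \<union> Z)) \<union> (Z - (X \<union> Y))"
  assume "A \<noteq> I"
  then have "I \<subset> A" using irr_subset unfolding I_def by blast
  then have "card I < card A" using \<open>finite A\<close> by (simp add: psubset_card_mono)
  have "I \<subseteq> U" and "finite U" using assms(1-3) unfolding I_def U_def by auto
  then have "card (U - I) = card U - card I" and "card I \<le> card U"
    by (simp_all add: card_Diff_subset card_mono finite_subset[of I U])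
  moreover have "card U + card (U - I) \<le> card X + card Y + card Z"
    using card_Un3_add_card_shared_le[OF assms(1-3)] unfolding U_def I_def .
  ultimately have "2 * card U \<le> card X + card Y + card Z + card I" by linarith
  moreover have "2 * card X + 2 * card Y + 2 * card Z + 2 * card A \<le> 4 * card U"
    using assms(5-8) card_U unfolding U_def by arith
  ultimately show False using \<open>card I < card A\<close> by linarith
qed

(* X, Y, Z stand for B1, B2, B3 in any order and A for the extra member of A_{<n/2};
   the hypotheses A_Un_ne express the minimality of the cover. *)
locale height4_triple =
  fixes F :: "nat set set" and X Y Z A :: "nat set"
  assumes union_closed: "union_closed F"
    and height_le: "height F \<le> 4"
    and members: "X \<in> F" "Y \<in> F" "Z \<in> F" "A \<in> F"
    and cover_psubset: "X \<union> Y \<union> Z \<subset> \<Union>F"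
    and irr_X: "X - (Y \<union> Z) \<noteq> {}" and irr_Y: "Y - (X \<union> Z) \<noteq> {}" and irr_Z: "Z - (X \<union> Y) \<noteq> {}"
    and A_subset: "A \<subseteq> X \<union> Y \<union> Z"
    and A_ne: "A \<noteq> X" "A \<noteq> Y" "A \<noteq> Z"
    and A_Un_ne: "A \<union> X \<noteq> X \<union> Y \<union> Z" "A \<union> Y \<noteq> X \<union> Y \<union> Z" "A \<union> Z \<noteq> X \<union> Y \<union> Z"
begin

lemma swap: "height4_triple F Y X Z A"
  by unfold_locales (insert union_closed height_le members cover_psubset irr_X irr_Y irr_Z
      A_subset A_ne A_Un_ne, simp_all add: Un_ac)

lemma rotate: "height4_triple F Y Z X A"
  by unfold_locales (insert union_closed height_le members cover_psubset irr_X irr_Y irr_Z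
      A_subset A_ne A_Un_ne, simp_all add: Un_ac)

lemma Un_mem: "P \<in> F \<Longrightarrow> Q \<in> F \<Longrightarrow> P \<union> Q \<in> F"
  using union_closed_Un[OF union_closed] .

lemma no_strict_chain5:
  assumes "P1 \<subset> P2" "P2 \<subset> P3" "P3 \<subset> P4" "P4 \<subset> \<Union>F"
    and "P1 \<in> F" "P2 \<in> F" "P3 \<in> F" "P4 \<in> F"
  shows False
proof -
  let ?C = "{P1, P2, P3, P4, \<Union>F}"
  have "finite F" using union_closed unfolding union_closed_def by blast
  moreover have "?C \<subseteq> F"
    using assms(5-8) union_closed_Union_mem[OF union_closed] by blast
  moreover have "is_chain_fam ?C"
    using assms(1-4) unfolding is_chain_fam_def by blast
  ultimately have "card ?C \<le> 4" using card_chain_le_height height_le by (meson le_trans)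
  moreover have "P1 \<subset> P3" "P1 \<subset> P4" "P1 \<subset> \<Union>F" "P2 \<subset> P4" "P2 \<subset> \<Union>F" "P3 \<subset> \<Union>F"
    using assms(1-4) by blast+
  then have "card ?C = 5" using assms(1-4) by (simp add: less_imp_neq)
  ultimately show False by simp
qed

lemma A_not_subset: "\<not> A \<subseteq> X"
proof
  assume "A \<subseteq> X"
  then have "A \<subset> X" using A_ne by blast
  moreover have "X \<subset> X \<union> Y" using irr_Y by blast
  moreover have "X \<union> Y \<subset> X \<union> Y \<union> Z" using irr_Z by blast
  ultimately show False
    by (rule no_strict_chain5[OF _ _ _ cover_psubset]; intro Un_mem members)
qed

lemma subset_Un_or_irr_subset: "Y \<subseteq> A \<union> X \<or> Z - (X \<union> Y) \<subseteq> A"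
proof (rule ccontr)
  assume neither: "\<not> (Y \<subseteq> A \<union> X \<or> Z - (X \<union> Y) \<subseteq> A)"
  have "X \<subset> X \<union> A" using A_not_subset by blast
  moreover have "X \<union> A \<subset> X \<union> A \<union> Y" and "X \<union> A \<union> Y \<subset> X \<union> Y \<union> Z"
    using neither A_subset by blast+
  ultimately show False
    by (rule no_strict_chain5[OF _ _ _ cover_psubset]; intro Un_mem members)
qed

lemma symdiff_subset_if_irr_not_subset:
  assumes "\<not> Z - (X \<union> Y) \<subseteq> A"
  shows "(X \<union> Y) - (X \<inter> Y) \<subseteq> A"
  using subset_Un_or_irr_subset
    height4_triple.subset_Un_or_irr_subset[OF swap, unfolded Un_commute[of Y X]] assms
  by blast

lemma irr_subset_if_other_irr_not_subset:
  assumes "\<not> Z - (X \<union> Y) \<subseteq> A"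
  shows "X - (Y \<union> Z) \<subseteq> A"
proof (rule ccontr)
  assume "\<not> ?thesis"
  then have "(Y \<union> Z) - (Y \<inter> Z) \<subseteq> A"
    by (rule height4_triple.symdiff_subset_if_irr_not_subset[OF rotate])
  then have "A \<union> Y = X \<union> Y \<union> Z"
    using symdiff_subset_if_irr_not_subset[OF assms] A_subset by blast
  then show False using A_Un_ne by blast
qed

lemma conditions_if_irr_not_subset:
  assumes "\<not> Z - (X \<union> Y) \<subseteq> A"
  shows "A \<inter> (Z - (X \<union> Y)) = {}" and "(X \<union> Y) - (X \<inter> Y) \<subseteq> A"
    and "A \<inter> (X - (Y \<union> Z)) \<noteq> {}" and "A \<inter> (Y - (X \<union> Z)) \<noteq> {}"
proof -
  show symdiff: "(X \<union> Y) - (X \<inter> Y) \<subseteq> A"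
    using symdiff_subset_if_irr_not_subset[OF assms] .
  show "A \<inter> (X - (Y \<union> Z)) \<noteq> {}"
    using irr_subset_if_other_irr_not_subset[OF assms] irr_X by blast
  show "A \<inter> (Y - (X \<union> Z)) \<noteq> {}"
    using height4_triple.irr_subset_if_other_irr_not_subset[OF swap, unfolded Un_commute[of Y X]]
      assms irr_Y by blast
  show "A \<inter> (Z - (X \<union> Y)) = {}"
  proof (rule ccontr)
    assume "A \<inter> (Z - (X \<union> Y)) \<noteq> {}"
    have "Y \<subset> Y \<union> X" using irr_X by blast
    moreover have "Y \<union> X \<subset> Y \<union> A" using symdiff \<open>A \<inter> (Z - (X \<union> Y)) \<noteq> {}\<close> by blast
    moreover have "Y \<union> A \<subset> X \<union> Y \<union> Z" using A_subset A_Un_ne by blast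
    ultimately show False
      by (rule no_strict_chain5[OF _ _ _ cover_psubset]; intro Un_mem members)
  qed
qed

end

lemma irr_three:
  assumes "card {X, Y, Z} = 3"
  shows "irr {X, Y, Z} X = X - (Y \<union> Z)" and "irr {X, Y, Z} Y = Y - (X \<union> Z)"
    and "irr {X, Y, Z} Z = Z - (X \<union> Y)"
proof -
  have "X \<noteq> Y" and "X \<noteq> Z" and "Y \<noteq> Z"
    using assms by (auto simp: card_insert_if split: if_splits)
  then show "irr {X, Y, Z} X = X - (Y \<union> Z)" and "irr {X, Y, Z} Y = Y - (X \<union> Z)"
    and "irr {X, Y, Z} Z = Z - (X \<union> Y)"
    unfolding irr_def by auto
qed

lemma height4_triple_if_B_choice:
  assumes "union_closed F" and "\<Union>F = {1..n}" and "height F = 4"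
    and B: "is_B_choice F n {B1, B2, B3}" and three: "card {B1, B2, B3} = 3"
    and card_below: "card (\<Union>(below F (real n / 2))) = n - 1"
    and A: "A \<in> below F (real n / 2) - {B1, B2, B3}"
  shows "height4_triple F B1 B2 B3 A"
proof -
  let ?b = "below F (real n / 2)" and ?U = "B1 \<union> B2 \<union> B3"
  have mem: "B1 \<in> ?b" "B2 \<in> ?b" "B3 \<in> ?b" "A \<in> ?b"
    using B A unfolding is_B_choice_def by auto
  have U: "\<Union>?b = ?U" using B unfolding is_B_choice_def by auto
  have irr_ne: "B1 - (B2 \<union> B3) \<noteq> {}" "B2 - (B1 \<union> B3) \<noteq> {}" "B3 - (B1 \<union> B2) \<noteq> {}"
    using B irr_three[OF three] unfolding is_B_choice_def irredundant_def by auto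
  have A_Un_ne: "A \<union> S \<noteq> ?U" if "S \<in> ?b" for S
  proof
    assume "A \<union> S = ?U"
    then have "card {B1, B2, B3} \<le> card {A, S}"
      using card_B_choice_le_card_cover[OF B, of "{A, S}"] mem that U by auto
    moreover have "card {A, S} \<le> 2" by (simp add: card_insert_if)
    ultimately show False using three by simp
  qed
  have "n \<noteq> 0" using mem(4) unfolding below_def by auto
  then have "card ?U < card {1..n}" using card_below U by simp
  moreover have "?U \<subseteq> {1..n}" using mem \<open>\<Union>F = {1..n}\<close> unfolding below_def by blast
  ultimately have "?U \<subset> \<Union>F"
    using \<open>\<Union>F = {1..n}\<close> by (metis psubsetI card_mono finite_atLeastAtMost leD)
  moreover have "B1 \<in> F" "B2 \<in> F" "B3 \<in> F" "A \<in> F" using mem unfolding below_def by auto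
  moreover have "A \<subseteq> ?U" using mem(4) U by blast
  moreover have "A \<noteq> B1" "A \<noteq> B2" "A \<noteq> B3" using A by auto
  ultimately show ?thesis
    using assms(1,3) irr_ne A_Un_ne[OF mem(1)] A_Un_ne[OF mem(2)] A_Un_ne[OF mem(3)]
    by unfold_locales simp_all
qed

theorem propositionI:
  fixes \<A> :: "nat set set" and n :: nat and B1 B2 B3 A :: "nat set"
  assumes "union_closed \<A>" and "\<Union>\<A> = {1..n}" and "separating \<A>"
    and "height \<A> = 4"
    and "is_B_choice \<A> n {B1, B2, B3}" and "card {B1, B2, B3} = 3"
    and "card (\<Union>(below \<A> (real n / 2))) = n - 1"
    and "A \<in> below \<A> (real n / 2) - {B1, B2, B3}"
  shows "A = irr {B1, B2, B3} B1 \<union> irr {B1, B2, B3} B2 \<union> irr {B1, B2, B3} B3 \<or>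
    (let c1 = (A \<inter> irr {B1, B2, B3} B1 = {} \<and> (B2 \<union> B3) - (B2 \<inter> B3) \<subseteq> A);
         c2 = (A \<inter> irr {B1, B2, B3} B2 = {} \<and> (B1 \<union> B3) - (B1 \<inter> B3) \<subseteq> A);
         c3 = (A \<inter> irr {B1, B2, B3} B3 = {} \<and> (B1 \<union> B2) - (B1 \<inter> B2) \<subseteq> A)
     in (c1 \<and> \<not> c2 \<and> \<not> c3) \<or> (\<not> c1 \<and> c2 \<and> \<not> c3) \<or> (\<not> c1 \<and> \<not> c2 \<and> c3))"
proof -
  interpret height4_triple \<A> B1 B2 B3 A
    using assms(1,2,4-8) by (rule height4_triple_if_B_choice)
  interpret rotated: height4_triple \<A> B2 B3 B1 A by (rule rotate)
  interpret rotated2: height4_triple \<A> B3 B1 B2 A by (rule rotated.rotate)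
  note irr = irr_three[OF assms(6)]
  consider (missing1) "\<not> B1 - (B2 \<union> B3) \<subseteq> A" | (missing2) "\<not> B2 - (B1 \<union> B3) \<subseteq> A"
    | (missing3) "\<not> B3 - (B1 \<union> B2) \<subseteq> A"
    | (all) "(B1 - (B2 \<union> B3)) \<union> (B2 - (B1 \<union> B3)) \<union> (B3 - (B1 \<union> B2)) \<subseteq> A" by blast
  then show ?thesis
  proof cases
    case missing1
    then show ?thesis
      using rotated.conditions_if_irr_not_subset unfolding irr Let_def by (simp add: Un_ac)
  next
    case missing2
    then show ?thesis
      using rotated2.conditions_if_irr_not_subset unfolding irr Let_def by (simp add: Un_ac Int_ac)
  next
    case missing3
    then show ?thesis using conditions_if_irr_not_subset unfolding irr Let_def by simp
  next
    case all
    have "{B1, B2, B3} \<subseteq> below \<A> (real n / 2)" and "\<Union>(below \<A> (real n / 2)) = B1 \<union> B2 \<union> B3"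
      using assms(5) unfolding is_B_choice_def by auto
    moreover have "finite S" and "2 * card S < n" if "S \<in> below \<A> (real n / 2)" for S
      using that assms(1) unfolding below_def union_closed_def by auto
    ultimately have "A = (B1 - (B2 \<union> B3)) \<union> (B2 - (B1 \<union> B3)) \<union> (B3 - (B1 \<union> B2))"
      using assms(7,8) by (intro eq_Un_irr_if_card_small[OF _ _ _ _ _ _ _ _ _ all]) auto
    then show ?thesis unfolding irr by blast
  qed
qed

end
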